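(* Let $D$ be a locatable digraph and let $v$ be a vertex of $D$ that is neither domination-forced nor location-forced. Then $V(D)\setminus\{v\}$ is an open neighbourhood locating-dominating set of $D$.
   Context: Digraphs are finite and may contain loops; between two distinct vertices $u,v$ there may be the arc $uv$, the arc $vu$, or both, but no arc is repeated. For a vertex $v$, $N^-(v)=\{u : uv \text{ is an arc}\}$ is its (open) in-neighbourhood (it contains $v$ iff $v$ has a loop). A set $S\subseteq V(D)$ is an open neighbourhood locating-dominating set (OLD set) of $D$ if every vertex of $D$ has an in-neighbour in $S$, and for every pair of distinct vertices $u,w$ there is a vertex of $S$ lying in exactly one of $N^-(u)$, $N^-(w)$. $D$ is locatable if it admits an OLD set. A vertex $v$ is domination-forced if there is a vertex $w$ with $N^-(w)=\{v\}$; it is location-forced if there are two distinct vertices $x,y$ with $N^-(x)\ominus N^-(y)=\{v\}$, where $\ominus$ denotes symmetric difference. *)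

theory Defs
  imports Main
begin

text \<open>A digraph is given by a finite vertex set V and an arc set A \<subseteq> V \<times> V
  (loops allowed, no multiple arcs since A is a set).\<close>

definition digraph :: "'a set \<Rightarrow> ('a \<times> 'a) set \<Rightarrow> bool" where
  "digraph V A \<longleftrightarrow> finite V \<and> A \<subseteq> V \<times> V"

definition in_nbh :: "('a \<times> 'a) set \<Rightarrow> 'a \<Rightarrow> 'a set" where
  "in_nbh A v = {u. (u, v) \<in> A}"

definition is_OLD :: "'a set \<Rightarrow> ('a \<times> 'a) set \<Rightarrow> 'a set \<Rightarrow> bool" where
  "is_OLD V A S \<longleftrightarrow> S \<subseteq> V
     \<and> (\<forall>v\<in>V. in_nbh A v \<inter> S \<noteq> {})
     \<and> (\<forall>u\<in>V. \<forall>w\<in>V. u \<noteq> w \<longrightarrow> (\<exists>s\<in>S. (s \<in> in_nbh A u) \<noteq> (s \<in> in_nbh A w)))"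

definition locatable :: "'a set \<Rightarrow> ('a \<times> 'a) set \<Rightarrow> bool" where
  "locatable V A \<longleftrightarrow> (\<exists>S. is_OLD V A S)"

definition domination_forced :: "'a set \<Rightarrow> ('a \<times> 'a) set \<Rightarrow> 'a \<Rightarrow> bool" where
  "domination_forced V A v \<longleftrightarrow> (\<exists>w\<in>V. in_nbh A w = {v})"

definition location_forced :: "'a set \<Rightarrow> ('a \<times> 'a) set \<Rightarrow> 'a \<Rightarrow> bool" where
  "location_forced V A v \<longleftrightarrow>
     (\<exists>x\<in>V. \<exists>y\<in>V. x \<noteq> y \<and> (in_nbh A x - in_nbh A y) \<union> (in_nbh A y - in_nbh A x) = {v})"

end

theory Submission
  imports Defs
begin

(* In a locatable digraph the in-neighbourhoods are nonempty and pairwise distinct. Given that,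
   deleting v from V can only leave w undominated if N^-(w) = {v}, and can only leave x, y
   unseparated if N^-(x) and N^-(y) differ in v alone. *)

lemma in_nbh_subset: "digraph V A \<Longrightarrow> in_nbh A w \<subseteq> V"
  unfolding digraph_def in_nbh_def by blast

lemma is_OLD_in_nbh_nonempty: "is_OLD V A S \<Longrightarrow> w \<in> V \<Longrightarrow> in_nbh A w \<noteq> {}"
  unfolding is_OLD_def by blast

lemma is_OLD_in_nbh_inj:
  "is_OLD V A S \<Longrightarrow> u \<in> V \<Longrightarrow> w \<in> V \<Longrightarrow> u \<noteq> w \<Longrightarrow> in_nbh A u \<noteq> in_nbh A w"
  unfolding is_OLD_def by blast

lemma in_nbh_meets_remove_vertex:
  assumes "digraph V A" "w \<in> V" "in_nbh A w \<noteq> {}" "\<not> domination_forced V A v"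
  shows "in_nbh A w \<inter> (V - {v}) \<noteq> {}"
proof
  assume "in_nbh A w \<inter> (V - {v}) = {}"
  with assms(3) in_nbh_subset[OF assms(1)] have "in_nbh A w = {v}" by blast
  with assms(2,4) show False unfolding domination_forced_def by blast
qed

lemma in_nbh_separated_by_remove_vertex:
  assumes "digraph V A" "u \<in> V" "w \<in> V" "in_nbh A u \<noteq> in_nbh A w"
    and "\<not> location_forced V A v"
  shows "\<exists>s\<in>V - {v}. (s \<in> in_nbh A u) \<noteq> (s \<in> in_nbh A w)"
proof (rule ccontr)
  assume "\<not> ?thesis"
  with assms(4) in_nbh_subset[OF assms(1)]
  have "(in_nbh A u - in_nbh A w) \<union> (in_nbh A w - in_nbh A u) = {v}" by blast
  moreover from assms(4) have "u \<noteq> w" by blast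
  ultimately show False using assms(2,3,5) unfolding location_forced_def by blast
qed

theorem proposition5:
  assumes "digraph V A"
    and "locatable V A"
    and "v \<in> V"
    and "\<not> domination_forced V A v"
    and "\<not> location_forced V A v"
  shows "is_OLD V A (V - {v})"
proof -
  obtain S where S: "is_OLD V A S"
    using assms(2) unfolding locatable_def by blast
  have "\<forall>w\<in>V. in_nbh A w \<inter> (V - {v}) \<noteq> {}"
  proof
    fix w assume w: "w \<in> V"
    show "in_nbh A w \<inter> (V - {v}) \<noteq> {}"
      using in_nbh_meets_remove_vertex[OF assms(1) w is_OLD_in_nbh_nonempty[OF S w] assms(4)] .
  qed
  moreover have "\<forall>u\<in>V. \<forall>w\<in>V. u \<noteq> w \<longrightarrow> (\<exists>s\<in>V - {v}. (s \<in> in_nbh A u) \<noteq> (s \<in> in_nbh A w))"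
  proof (intro ballI impI)
    fix u w assume uw: "u \<in> V" "w \<in> V" "u \<noteq> w"
    show "\<exists>s\<in>V - {v}. (s \<in> in_nbh A u) \<noteq> (s \<in> in_nbh A w)"
      using in_nbh_separated_by_remove_vertex[OF assms(1) uw(1,2) is_OLD_in_nbh_inj[OF S uw] assms(5)] .
  qed
  ultimately show ?thesis
    unfolding is_OLD_def by blast
qed

end
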